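(* Let $P$ be a convex polygon. (1) Every locally maximal parallelogram in $P$ is inscribed. (2) For any inscribed slidable parallelogram in $P$, there is an inscribed non-slidable parallelogram in $P$ with the same area.
   Context: $P$ is regarded as a compact set (boundary $\partial P$ plus interior); its edges are regarded as open segments (not containing their endpoints). A parallelogram lies in $P$ if all four corners lie in $P$. A parallelogram $A_0A_1A_2A_3$ lying in $P$ is locally maximal if there exists $\delta>0$ such that every parallelogram $B_0B_1B_2B_3$ lying in $P$ with $|A_iB_i|<\delta$ for all $i$ has area at most that of $A_0A_1A_2A_3$. A parallelogram is inscribed if all its corners lie on $\partial P$. It is slidable if two of its corners lie in the same (open) edge of $P$ (a corner in the interior of an edge and a corner at an endpoint of that edge do not count as lying in the same edge), and non-slidable otherwise. *)

theory Defs
  imports "HOL-Analysis.Analysis"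
begin

type_synonym pt = "real^2"

definition convex_polygon :: "pt set \<Rightarrow> bool" where
  "convex_polygon P \<longleftrightarrow> (\<exists>S. finite S \<and> P = convex hull S) \<and> interior P \<noteq> {}"

definition poly_edges :: "pt set \<Rightarrow> pt set set" where
  "poly_edges P = {open_segment a b | a b. a extreme_point_of P \<and> b extreme_point_of P
      \<and> a \<noteq> b \<and> closed_segment a b \<subseteq> frontier P}"

definition cross2 :: "pt \<Rightarrow> pt \<Rightarrow> real" where
  "cross2 v w = v$1 * w$2 - v$2 * w$1"

definition par_area :: "pt \<Rightarrow> pt \<Rightarrow> pt \<Rightarrow> pt \<Rightarrow> real" where
  "par_area a0 a1 a2 a3 = \<bar>cross2 (a1 - a0) (a3 - a0)\<bar>"

text \<open>A (non-degenerate) parallelogram A0 A1 A2 A3: diagonals bisect each other,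
  and the corners are not collinear.\<close>
definition is_parallelogram :: "pt \<Rightarrow> pt \<Rightarrow> pt \<Rightarrow> pt \<Rightarrow> bool" where
  "is_parallelogram a0 a1 a2 a3 \<longleftrightarrow> a0 + a2 = a1 + a3 \<and> par_area a0 a1 a2 a3 \<noteq> 0"

definition par_in :: "pt set \<Rightarrow> pt \<Rightarrow> pt \<Rightarrow> pt \<Rightarrow> pt \<Rightarrow> bool" where
  "par_in P a0 a1 a2 a3 \<longleftrightarrow> is_parallelogram a0 a1 a2 a3 \<and>
     a0 \<in> P \<and> a1 \<in> P \<and> a2 \<in> P \<and> a3 \<in> P"

definition locally_maximal :: "pt set \<Rightarrow> pt \<Rightarrow> pt \<Rightarrow> pt \<Rightarrow> pt \<Rightarrow> bool" where
  "locally_maximal P a0 a1 a2 a3 \<longleftrightarrow> par_in P a0 a1 a2 a3 \<and>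
     (\<exists>\<delta>>0. \<forall>b0 b1 b2 b3. par_in P b0 b1 b2 b3 \<and> dist a0 b0 < \<delta> \<and> dist a1 b1 < \<delta>
        \<and> dist a2 b2 < \<delta> \<and> dist a3 b3 < \<delta> \<longrightarrow> par_area b0 b1 b2 b3 \<le> par_area a0 a1 a2 a3)"

definition inscribed :: "pt set \<Rightarrow> pt \<Rightarrow> pt \<Rightarrow> pt \<Rightarrow> pt \<Rightarrow> bool" where
  "inscribed P a0 a1 a2 a3 \<longleftrightarrow> par_in P a0 a1 a2 a3 \<and>
     a0 \<in> frontier P \<and> a1 \<in> frontier P \<and> a2 \<in> frontier P \<and> a3 \<in> frontier P"

definition slidable :: "pt set \<Rightarrow> pt \<Rightarrow> pt \<Rightarrow> pt \<Rightarrow> pt \<Rightarrow> bool" where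
  "slidable P a0 a1 a2 a3 \<longleftrightarrow> (let A = [a0, a1, a2, a3] in
     \<exists>E\<in>poly_edges P. \<exists>i<4. \<exists>j<4. i \<noteq> j \<and> A ! i \<in> E \<and> A ! j \<in> E)"

end

theory Submission
  imports Defs
begin

text \<open>
  (1) If a corner \<open>a\<^sub>0\<close> lies in the interior of \<open>P\<close>, push the side \<open>a\<^sub>0a\<^sub>1\<close> away from the
  opposite side: \<open>a\<^sub>0\<close> has room to move, and \<open>a\<^sub>1\<close> is moved along a segment towards a point near
  \<open>a\<^sub>0\<close>, which stays in \<open>P\<close> by convexity. The area strictly grows, so \<open>a\<^sub>0\<close> must lie on the
  boundary.

  (2) Two corners in a common edge span a side of the parallelogram, since opposite corners on a
  supporting line would force all four corners onto it. Sliding that side along the edge keeps the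
  area (a shear) and the other corners fixed; slide until one of its corners reaches a vertex, which
  lies in no open edge. Do the same for the opposite side if needed. The result is non-slidable: a
  common edge of a corner of one side and a corner of the other would again put opposite corners on
  the supporting line of the first side.
\<close>

lemma cross2_eq_0_if_orthogonal:
  assumes "(a::pt) \<noteq> 0" "a \<bullet> x = 0" "a \<bullet> y = 0"
  shows "cross2 x y = 0"
proof -
  have x: "a$1 * x$1 = - (a$2 * x$2)" "a$2 * x$2 = - (a$1 * x$1)"
    and y: "a$1 * y$1 = - (a$2 * y$2)" "a$2 * y$2 = - (a$1 * y$1)"
    using assms(2,3) by (simp_all add: inner_vec_def sum_2 eq_neg_iff_add_eq_0 add.commute)
  have "a$1 * cross2 x y = (a$1 * x$1) * y$2 - (a$1 * y$1) * x$2"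
    by (simp add: cross2_def algebra_simps)
  also have "\<dots> = 0"
    unfolding x(1) y(1) by (simp add: algebra_simps)
  finally have "a$1 * cross2 x y = 0" .
  have "a$2 * cross2 x y = x$1 * (a$2 * y$2) - y$1 * (a$2 * x$2)"
    by (simp add: cross2_def algebra_simps)
  also have "\<dots> = 0"
    unfolding x(2) y(2) by (simp add: algebra_simps)
  finally have "a$2 * cross2 x y = 0" .
  moreover note \<open>a$1 * cross2 x y = 0\<close>
  moreover have "a$1 \<noteq> 0 \<or> a$2 \<noteq> 0"
    using assms(1) by (auto simp: vec_eq_iff forall_2)
  ultimately show ?thesis by auto
qed

lemma par_area_eq_0_if_on_line:
  assumes "(a::pt) \<noteq> 0" "a \<bullet> x0 = c" "a \<bullet> x1 = c" "a \<bullet> x3 = c"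
  shows "par_area x0 x1 x2 x3 = 0"
  using cross2_eq_0_if_orthogonal[OF assms(1)] assms(2-4)
  by (simp add: par_area_def inner_diff_right)

lemma par_area_shear:
  assumes "a1 - a0 = k *\<^sub>R w"
  shows "par_area (a0 + s *\<^sub>R w) (a1 + s *\<^sub>R w) a2 a3 = par_area a0 a1 a2 a3"
  using assms by (simp add: par_area_def cross2_def algebra_simps)

lemma par_area_rotate:
  assumes "par_in P a0 a1 a2 a3"
  shows "par_area a1 a2 a3 a0 = par_area a0 a1 a2 a3"
proof -
  have a2: "a2 = a1 + a3 - a0"
    using assms by (auto simp: par_in_def is_parallelogram_def algebra_simps)
  show ?thesis
    unfolding a2 par_area_def cross2_def by (simp add: algebra_simps)
qed

lemma par_in_rotate: "par_in P a0 a1 a2 a3 \<Longrightarrow> par_in P a1 a2 a3 a0"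
  using par_area_rotate
  by (fastforce simp: par_in_def is_parallelogram_def add.commute)

lemma par_area_rotate2:
  assumes "par_in P a0 a1 a2 a3"
  shows "par_area a2 a3 a0 a1 = par_area a0 a1 a2 a3"
  using par_area_rotate[OF par_in_rotate[OF assms]] par_area_rotate[OF assms] by simp

lemma inscribed_rotate: "inscribed P a0 a1 a2 a3 \<Longrightarrow> inscribed P a1 a2 a3 a0"
  using par_in_rotate by (auto simp: inscribed_def)

lemma locally_maximal_rotate:
  assumes "locally_maximal P a0 a1 a2 a3"
  shows "locally_maximal P a1 a2 a3 a0"
proof -
  obtain d where "d > 0" and pa: "par_in P a0 a1 a2 a3"
    and max: "\<And>b0 b1 b2 b3. par_in P b0 b1 b2 b3 \<Longrightarrow> dist a0 b0 < d \<Longrightarrow> dist a1 b1 < d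
        \<Longrightarrow> dist a2 b2 < d \<Longrightarrow> dist a3 b3 < d \<Longrightarrow> par_area b0 b1 b2 b3 \<le> par_area a0 a1 a2 a3"
    using assms unfolding locally_maximal_def by blast
  have "par_area b0 b1 b2 b3 \<le> par_area a1 a2 a3 a0"
    if pb: "par_in P b0 b1 b2 b3" and "dist a1 b0 < d" "dist a2 b1 < d" "dist a3 b2 < d" "dist a0 b3 < d"
    for b0 b1 b2 b3
  proof -
    have pb1: "par_in P b1 b2 b3 b0" and pb2: "par_in P b2 b3 b0 b1" and pb3: "par_in P b3 b0 b1 b2"
      using par_in_rotate pb by blast+
    have "par_area b0 b1 b2 b3 = par_area b3 b0 b1 b2"
      using par_area_rotate[OF pb1] par_area_rotate[OF pb2] par_area_rotate[OF pb3] by simp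
    also have "\<dots> \<le> par_area a0 a1 a2 a3"
      using max[OF pb3] that by blast
    finally show ?thesis
      using par_area_rotate[OF pa] by simp
  qed
  then show ?thesis
    unfolding locally_maximal_def using \<open>d > 0\<close> par_in_rotate[OF pa] by blast
qed

lemma small_positive_multiple:
  fixes v :: "'a::real_normed_vector"
  assumes "0 < e"
  obtains t :: real where "0 < t" "t \<le> 1" "norm (t *\<^sub>R v) < e"
proof
  have "0 < norm v + 1"
    using norm_ge_zero[of v] by linarith
  define t where "t = min 1 (e / (norm v + 1))"
  show "0 < t" "t \<le> 1"
    using assms \<open>0 < norm v + 1\<close> by (auto simp: t_def)
  have "norm (t *\<^sub>R v) = t * norm v"
    using \<open>0 < t\<close> by simp
  also have "\<dots> \<le> e / (norm v + 1) * norm v"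
    by (intro mult_right_mono) (simp_all add: t_def)
  also have "\<dots> < e"
    using assms \<open>0 < norm v + 1\<close> by (simp add: pos_divide_less_eq distrib_left)
  finally show "norm (t *\<^sub>R v) < e" .
qed

lemma locally_maximal_corner_not_interior:
  assumes "convex P" and lm: "locally_maximal P a0 a1 a2 a3"
  shows "a0 \<notin> interior P"
proof
  assume "a0 \<in> interior P"
  then obtain e where "e > 0" and ball: "ball a0 e \<subseteq> P"
    by (meson mem_interior)
  obtain d where "d > 0" and pa: "par_in P a0 a1 a2 a3"
    and max: "\<And>b0 b1. par_in P b0 b1 a2 a3 \<Longrightarrow> dist a0 b0 < d \<Longrightarrow> dist a1 b1 < d
        \<Longrightarrow> par_area b0 b1 a2 a3 \<le> par_area a0 a1 a2 a3"
    using lm unfolding locally_maximal_def by force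
  define d1 where "d1 = a1 - a0"
  define d3 where "d3 = a3 - a0"
  obtain r where "r > 0" and "norm (r *\<^sub>R d3) < e"
    using small_positive_multiple[OF \<open>e > 0\<close>] by metis
  define p where "p = a0 - r *\<^sub>R d3"
  have "p \<in> P"
    using ball \<open>norm (r *\<^sub>R d3) < e\<close> by (auto simp: p_def dist_norm)
  obtain t where "t > 0" "t \<le> 1" and small: "norm (t *\<^sub>R (p - a1)) < min d e"
    using small_positive_multiple[of "min d e"] \<open>d > 0\<close> \<open>e > 0\<close> by auto
  define b0 where "b0 = a0 + t *\<^sub>R (p - a1)"
  define b1 where "b1 = a1 + t *\<^sub>R (p - a1)"
  have "b0 \<in> P"
    using ball small by (auto simp: b0_def dist_norm)
  have "b1 \<in> P"
  proof -
    have "b1 = (1 - t) *\<^sub>R a1 + t *\<^sub>R p"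
      by (simp add: b1_def algebra_simps)
    then show ?thesis
      using \<open>convex P\<close> \<open>p \<in> P\<close> pa \<open>t > 0\<close> \<open>t \<le> 1\<close> by (auto simp: par_in_def convex_def)
  qed
  have area: "par_area b0 b1 a2 a3 = (1 + t * r) * par_area a0 a1 a2 a3"
  proof -
    have "b1 - b0 = d1" "a3 - b0 = (1 + t * r) *\<^sub>R d3 + t *\<^sub>R d1"
      by (simp_all add: b0_def b1_def d1_def d3_def p_def algebra_simps)
    then have "cross2 (b1 - b0) (a3 - b0) = (1 + t * r) * cross2 d1 d3"
      by (simp add: cross2_def algebra_simps)
    then show ?thesis
      using \<open>t > 0\<close> \<open>r > 0\<close> by (simp add: par_area_def d1_def d3_def abs_mult)
  qed
  moreover have pos: "par_area a0 a1 a2 a3 > 0"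
    using pa by (simp add: par_in_def is_parallelogram_def par_area_def)
  ultimately have gt: "par_area b0 b1 a2 a3 > par_area a0 a1 a2 a3"
    using \<open>t > 0\<close> \<open>r > 0\<close> by (simp add: distrib_right)
  have "par_in P b0 b1 a2 a3"
    using pa pos gt \<open>b0 \<in> P\<close> \<open>b1 \<in> P\<close>
    by (auto simp: par_in_def is_parallelogram_def b0_def b1_def algebra_simps)
  moreover have "dist a0 b0 < d" "dist a1 b1 < d"
    using small by (auto simp: b0_def b1_def dist_norm)
  ultimately have "par_area b0 b1 a2 a3 \<le> par_area a0 a1 a2 a3"
    using max by blast
  then show False
    using gt by simp
qed

lemma locally_maximal_imp_inscribed:
  assumes "convex P" "closed P" and lm: "locally_maximal P a0 a1 a2 a3"
  shows "inscribed P a0 a1 a2 a3"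
proof -
  have lm1: "locally_maximal P a1 a2 a3 a0" and lm2: "locally_maximal P a2 a3 a0 a1"
    and lm3: "locally_maximal P a3 a0 a1 a2"
    using locally_maximal_rotate lm by blast+
  have "a0 \<notin> interior P" "a1 \<notin> interior P" "a2 \<notin> interior P" "a3 \<notin> interior P"
    using locally_maximal_corner_not_interior[OF \<open>convex P\<close>] lm lm1 lm2 lm3 by blast+
  moreover have "par_in P a0 a1 a2 a3"
    using lm by (simp add: locally_maximal_def)
  ultimately show ?thesis
    using \<open>closed P\<close> by (simp add: inscribed_def par_in_def frontier_def)
qed

lemma edge_supporting_line:
  assumes "convex P" "closed P" "interior P \<noteq> {}" "E \<in> poly_edges P"
  obtains a c u v where "(a::pt) \<noteq> 0" "\<forall>x\<in>P. c \<le> a \<bullet> x" "E = open_segment u v"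
    "u extreme_point_of P" "closed_segment u v \<subseteq> frontier P"
    "\<forall>x\<in>closed_segment u v. a \<bullet> x = c"
proof -
  obtain u v where uv: "E = open_segment u v" "u extreme_point_of P" "v extreme_point_of P"
    and fr: "closed_segment u v \<subseteq> frontier P"
    using assms(4) unfolding poly_edges_def by blast
  define m where "m = midpoint u v"
  have "m \<in> frontier P"
    using fr midpoint_in_closed_segment unfolding m_def by blast
  then have "m \<in> closure P" "m \<notin> rel_interior P"
    using rel_interior_nonempty_interior[OF assms(3)] by (simp_all add: frontier_def)
  then obtain a where "a \<noteq> 0" and "\<And>y. y \<in> closure P \<Longrightarrow> a \<bullet> m \<le> a \<bullet> y"
    using supporting_hyperplane_relative_frontier[OF assms(1)] by metis
  then have aP: "\<forall>x\<in>P. a \<bullet> m \<le> a \<bullet> x"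
    using closure_subset by blast
  have "u \<in> P" "v \<in> P"
    using uv by (auto simp: extreme_point_of_def)
  moreover have "a \<bullet> m = (a \<bullet> u + a \<bullet> v) / 2"
    by (simp add: m_def midpoint_def inner_add_right)
  moreover have "a \<bullet> m \<le> a \<bullet> u" "a \<bullet> m \<le> a \<bullet> v"
    using aP \<open>u \<in> P\<close> \<open>v \<in> P\<close> by auto
  ultimately have "a \<bullet> u = a \<bullet> m" "a \<bullet> v = a \<bullet> m"
    by argo+
  have "a \<bullet> x = a \<bullet> m" if "x \<in> closed_segment u v" for x
  proof -
    obtain s where x: "x = (1 - s) *\<^sub>R u + s *\<^sub>R v"
      using \<open>x \<in> closed_segment u v\<close> by (auto simp: in_segment)
    show ?thesis
      unfolding x using \<open>a \<bullet> u = a \<bullet> m\<close> \<open>a \<bullet> v = a \<bullet> m\<close>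
      by (simp add: inner_add_right algebra_simps)
  qed
  then show ?thesis
    using that \<open>a \<noteq> 0\<close> aP uv fr by blast
qed

lemma supporting_line_contains_edge:
  assumes aP: "\<forall>x\<in>P. c \<le> (a::pt) \<bullet> x" and E: "E \<in> poly_edges P"
    and "x \<in> E" "y \<in> E" "a \<bullet> x = c"
  shows "a \<bullet> y = c"
proof -
  obtain p q where E_eq: "E = open_segment p q" and "p \<in> P" "q \<in> P"
    using E by (auto simp: poly_edges_def extreme_point_of_def)
  then have hp: "c \<le> a \<bullet> p" "c \<le> a \<bullet> q"
    using aP by auto
  obtain s where s: "0 < s" "s < 1" "x = (1 - s) *\<^sub>R p + s *\<^sub>R q"
    using \<open>x \<in> E\<close> E_eq by (auto simp: in_segment)
  have "(1 - s) * (a \<bullet> p - c) + s * (a \<bullet> q - c) = 0"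
    using \<open>a \<bullet> x = c\<close> s(3) by (simp add: inner_add_right algebra_simps)
  moreover have "(1 - s) * (a \<bullet> p - c) \<ge> 0" "s * (a \<bullet> q - c) \<ge> 0"
    using s hp by simp_all
  ultimately have "a \<bullet> p = c" "a \<bullet> q = c"
    using s by (simp_all add: add_nonneg_eq_0_iff)
  obtain s' where y: "y = (1 - s') *\<^sub>R p + s' *\<^sub>R q"
    using \<open>y \<in> E\<close> E_eq by (auto simp: in_segment)
  show ?thesis
    unfolding y using \<open>a \<bullet> p = c\<close> \<open>a \<bullet> q = c\<close> by (simp add: inner_add_right algebra_simps)
qed

lemma extreme_point_not_in_edge:
  assumes "u extreme_point_of P" "E \<in> poly_edges P"
  shows "u \<notin> E"
  using assms by (auto simp: poly_edges_def extreme_point_of_def)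

lemma opposite_corners_not_on_supporting_line:
  assumes pa: "par_in P a0 a1 a2 a3" and "(a::pt) \<noteq> 0" and aP: "\<forall>x\<in>P. c \<le> a \<bullet> x"
    and "a \<bullet> a0 = c" "a \<bullet> a2 = c"
  shows False
proof -
  have "a0 + a2 = a1 + a3"
    using pa by (simp add: par_in_def is_parallelogram_def)
  then have "a \<bullet> a0 + a \<bullet> a2 = a \<bullet> a1 + a \<bullet> a3"
    by (metis inner_add_right)
  moreover have "c \<le> a \<bullet> a1" "c \<le> a \<bullet> a3"
    using pa aP by (auto simp: par_in_def)
  ultimately have "a \<bullet> a1 = c" "a \<bullet> a3 = c"
    using assms(4,5) by linarith+
  then have "par_area a0 a1 a2 a3 = 0"
    using par_area_eq_0_if_on_line[OF \<open>a \<noteq> 0\<close> \<open>a \<bullet> a0 = c\<close>] by blast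
  then show False
    using pa by (simp add: par_in_def is_parallelogram_def)
qed

lemma opposite_corners_not_in_edge:
  assumes "convex P" "closed P" "interior P \<noteq> {}"
    and pa: "par_in P a0 a1 a2 a3" and E: "E \<in> poly_edges P" "a0 \<in> E" "a2 \<in> E"
  shows False
proof -
  obtain a c u v where "(a::pt) \<noteq> 0" "\<forall>x\<in>P. c \<le> a \<bullet> x" "E = open_segment u v"
    "\<forall>x\<in>closed_segment u v. a \<bullet> x = c"
    using edge_supporting_line[OF assms(1-3) E(1)] by metis
  then show False
    using opposite_corners_not_on_supporting_line[OF pa] E open_closed_segment by metis
qed

lemma slidable_iff:
  "slidable P a0 a1 a2 a3 \<longleftrightarrow> (\<exists>E\<in>poly_edges P. a0 \<in> E \<and> a1 \<in> E \<or> a1 \<in> E \<and> a2 \<in> E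
     \<or> a2 \<in> E \<and> a3 \<in> E \<or> a3 \<in> E \<and> a0 \<in> E \<or> a0 \<in> E \<and> a2 \<in> E \<or> a1 \<in> E \<and> a3 \<in> E)"
proof -
  have "(\<exists>i<4. P i) \<longleftrightarrow> P 0 \<or> P 1 \<or> P 2 \<or> P 3" for P :: "nat \<Rightarrow> bool"
    by (auto simp: less_Suc_eq numeral_eq_Suc)
  then show ?thesis
    unfolding slidable_def Let_def by (auto simp: numeral_eq_Suc)
qed

lemma not_slidable_if_sides_off_edges:
  assumes pa: "par_in P x0 x1 x2 x3" and "(a::pt) \<noteq> 0" and aP: "\<forall>x\<in>P. c \<le> a \<bullet> x"
    and "a \<bullet> x0 = c" "a \<bullet> x1 = c"
    and "\<forall>E\<in>poly_edges P. \<not> (x0 \<in> E \<and> x1 \<in> E)" "\<forall>E\<in>poly_edges P. \<not> (x2 \<in> E \<and> x3 \<in> E)"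
  shows "\<not> slidable P x0 x1 x2 x3"
proof
  have pa1: "par_in P x1 x2 x3 x0"
    using par_in_rotate[OF pa] .
  have no_cross: False
    if "E \<in> poly_edges P" "x \<in> E" "y \<in> E" "x = x0 \<or> x = x1" "y = x2 \<or> y = x3" for E x y
  proof -
    have "a \<bullet> y = c"
      using supporting_line_contains_edge[OF aP that(1-3)] that(4) assms(4,5) by blast
    then show False
      using that(5) opposite_corners_not_on_supporting_line[OF pa \<open>a \<noteq> 0\<close> aP \<open>a \<bullet> x0 = c\<close>]
        opposite_corners_not_on_supporting_line[OF pa1 \<open>a \<noteq> 0\<close> aP \<open>a \<bullet> x1 = c\<close>] by blast
  qed
  assume "slidable P x0 x1 x2 x3"
  then show False
    unfolding slidable_iff using assms(6,7) no_cross by blast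
qed

lemma slide_to_endpoint:
  assumes "x \<in> open_segment u v" "y \<in> open_segment u v"
  obtains s k where "x - s *\<^sub>R (v - u) \<in> closed_segment u v" "y - s *\<^sub>R (v - u) \<in> closed_segment u v"
    "x - s *\<^sub>R (v - u) = u \<or> y - s *\<^sub>R (v - u) = u" "y - x = k *\<^sub>R (v - u)"
proof -
  obtain \<alpha> \<beta> where "0 < \<alpha>" "\<alpha> < 1" and x: "x = (1 - \<alpha>) *\<^sub>R u + \<alpha> *\<^sub>R v"
    and "0 < \<beta>" "\<beta> < 1" and y: "y = (1 - \<beta>) *\<^sub>R u + \<beta> *\<^sub>R v"
    using assms by (auto simp: in_segment)
  define s where "s = min \<alpha> \<beta>"
  have x': "x - s *\<^sub>R (v - u) = (1 - (\<alpha> - s)) *\<^sub>R u + (\<alpha> - s) *\<^sub>R v"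
    and y': "y - s *\<^sub>R (v - u) = (1 - (\<beta> - s)) *\<^sub>R u + (\<beta> - s) *\<^sub>R v"
    and "y - x = (\<beta> - \<alpha>) *\<^sub>R (v - u)"
    by (simp_all add: x y algebra_simps)
  have bounds: "0 \<le> \<alpha> - s" "\<alpha> - s \<le> 1" "0 \<le> \<beta> - s" "\<beta> - s \<le> 1" "\<alpha> - s = 0 \<or> \<beta> - s = 0"
    using \<open>0 < \<alpha>\<close> \<open>\<alpha> < 1\<close> \<open>0 < \<beta>\<close> \<open>\<beta> < 1\<close> by (auto simp: s_def min_def)
  then have "x - s *\<^sub>R (v - u) \<in> closed_segment u v" "y - s *\<^sub>R (v - u) \<in> closed_segment u v"
    unfolding x' y' in_segment by blast+
  moreover have "x - s *\<^sub>R (v - u) = u \<or> y - s *\<^sub>R (v - u) = u"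
    unfolding x' y' using bounds(5) by auto
  ultimately show ?thesis
    using that \<open>y - x = (\<beta> - \<alpha>) *\<^sub>R (v - u)\<close> by blast
qed

lemma slide_side_off_edge:
  assumes "convex P" "closed P" "interior P \<noteq> {}"
    and ins: "inscribed P a0 a1 a2 a3" and E: "E \<in> poly_edges P" "a0 \<in> E" "a1 \<in> E"
  obtains b0 b1 a c where "inscribed P b0 b1 a2 a3" "par_area b0 b1 a2 a3 = par_area a0 a1 a2 a3"
    "\<forall>E\<in>poly_edges P. \<not> (b0 \<in> E \<and> b1 \<in> E)"
    "(a::pt) \<noteq> 0" "\<forall>x\<in>P. c \<le> a \<bullet> x" "a \<bullet> b0 = c" "a \<bullet> b1 = c"
proof -
  obtain a c u v where "(a::pt) \<noteq> 0" "\<forall>x\<in>P. c \<le> a \<bullet> x" and E_eq: "E = open_segment u v"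
    and "u extreme_point_of P" and fr: "closed_segment u v \<subseteq> frontier P"
    and line: "\<forall>x\<in>closed_segment u v. a \<bullet> x = c"
    using edge_supporting_line[OF assms(1-3) E(1)] by metis
  obtain s k where seg: "a0 - s *\<^sub>R (v - u) \<in> closed_segment u v" "a1 - s *\<^sub>R (v - u) \<in> closed_segment u v"
    and at_u: "a0 - s *\<^sub>R (v - u) = u \<or> a1 - s *\<^sub>R (v - u) = u" and "a1 - a0 = k *\<^sub>R (v - u)"
    using slide_to_endpoint E E_eq by metis
  define b0 where "b0 = a0 - s *\<^sub>R (v - u)"
  define b1 where "b1 = a1 - s *\<^sub>R (v - u)"
  have area: "par_area b0 b1 a2 a3 = par_area a0 a1 a2 a3"
    using par_area_shear[OF \<open>a1 - a0 = k *\<^sub>R (v - u)\<close>, of "- s"] by (simp add: b0_def b1_def)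
  have "b0 \<in> frontier P" "b1 \<in> frontier P"
    using seg fr by (auto simp: b0_def b1_def)
  moreover have "frontier P \<subseteq> P"
    using \<open>closed P\<close> by (simp add: frontier_subset_closed)
  moreover have "b0 + a2 = b1 + a3"
    using ins by (simp add: b0_def b1_def inscribed_def par_in_def is_parallelogram_def algebra_simps)
  ultimately have "inscribed P b0 b1 a2 a3"
    using ins area by (auto simp: inscribed_def par_in_def is_parallelogram_def)
  moreover have "\<forall>E\<in>poly_edges P. \<not> (b0 \<in> E \<and> b1 \<in> E)"
    using at_u extreme_point_not_in_edge[OF \<open>u extreme_point_of P\<close>] by (auto simp: b0_def b1_def)
  ultimately show ?thesis
    using that area \<open>a \<noteq> 0\<close> \<open>\<forall>x\<in>P. c \<le> a \<bullet> x\<close> line seg by (simp add: b0_def b1_def)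
qed

lemma non_slidable_of_side_in_edge:
  assumes "convex P" "closed P" "interior P \<noteq> {}"
    and ins: "inscribed P a0 a1 a2 a3" and E: "E \<in> poly_edges P" "a0 \<in> E" "a1 \<in> E"
  shows "\<exists>b0 b1 b2 b3. inscribed P b0 b1 b2 b3 \<and> \<not> slidable P b0 b1 b2 b3
            \<and> par_area b0 b1 b2 b3 = par_area a0 a1 a2 a3"
proof -
  obtain b0 b1 a c where insb: "inscribed P b0 b1 a2 a3"
    and area_b: "par_area b0 b1 a2 a3 = par_area a0 a1 a2 a3"
    and off_b: "\<forall>E\<in>poly_edges P. \<not> (b0 \<in> E \<and> b1 \<in> E)"
    and line: "(a::pt) \<noteq> 0" "\<forall>x\<in>P. c \<le> a \<bullet> x" "a \<bullet> b0 = c" "a \<bullet> b1 = c"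
    using slide_side_off_edge[OF assms] by metis
  obtain b2 b3 where insd: "inscribed P b0 b1 b2 b3"
    and area_d: "par_area b0 b1 b2 b3 = par_area b0 b1 a2 a3"
    and off_d: "\<forall>E\<in>poly_edges P. \<not> (b2 \<in> E \<and> b3 \<in> E)"
  proof (cases "\<exists>E'\<in>poly_edges P. a2 \<in> E' \<and> a3 \<in> E'")
    case True
    then obtain E' where E': "E' \<in> poly_edges P" "a2 \<in> E'" "a3 \<in> E'"
      by blast
    obtain b2 b3 where insc: "inscribed P b2 b3 b0 b1"
      and "par_area b2 b3 b0 b1 = par_area a2 a3 b0 b1"
      and "\<forall>E\<in>poly_edges P. \<not> (b2 \<in> E \<and> b3 \<in> E)"
      using slide_side_off_edge[OF assms(1-3) inscribed_rotate[OF inscribed_rotate[OF insb]] E']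
      by metis
    moreover have "inscribed P b0 b1 b2 b3"
      using inscribed_rotate insc by blast
    ultimately show ?thesis
      using that par_area_rotate2 insb by (metis inscribed_def)
  next
    case False
    then show ?thesis
      using that insb by blast
  qed
  have "\<not> slidable P b0 b1 b2 b3"
    using not_slidable_if_sides_off_edges line off_b off_d insd by (simp add: inscribed_def)
  then show ?thesis
    using insd area_d area_b by metis
qed

lemma non_slidable_of_slidable:
  assumes "convex P" "closed P" "interior P \<noteq> {}"
    and ins: "inscribed P a0 a1 a2 a3" and "slidable P a0 a1 a2 a3"
  shows "\<exists>b0 b1 b2 b3. inscribed P b0 b1 b2 b3 \<and> \<not> slidable P b0 b1 b2 b3
            \<and> par_area b0 b1 b2 b3 = par_area a0 a1 a2 a3"
proof -
  have ins1: "inscribed P a1 a2 a3 a0" and ins2: "inscribed P a2 a3 a0 a1"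
    and ins3: "inscribed P a3 a0 a1 a2"
    using inscribed_rotate ins by blast+
  then have pa: "par_in P a0 a1 a2 a3" and pa1: "par_in P a1 a2 a3 a0"
    and pa2: "par_in P a2 a3 a0 a1"
    using ins by (simp_all add: inscribed_def)
  have area1: "par_area a1 a2 a3 a0 = par_area a0 a1 a2 a3"
    and area2: "par_area a2 a3 a0 a1 = par_area a0 a1 a2 a3"
    and area3: "par_area a3 a0 a1 a2 = par_area a0 a1 a2 a3"
    using par_area_rotate[OF pa] par_area_rotate2[OF pa] par_area_rotate[OF pa2] by simp_all
  obtain E where E: "E \<in> poly_edges P" and "a0 \<in> E \<and> a1 \<in> E \<or> a1 \<in> E \<and> a2 \<in> E
     \<or> a2 \<in> E \<and> a3 \<in> E \<or> a3 \<in> E \<and> a0 \<in> E \<or> a0 \<in> E \<and> a2 \<in> E \<or> a1 \<in> E \<and> a3 \<in> E"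
    using \<open>slidable P a0 a1 a2 a3\<close> unfolding slidable_iff by blast
  then consider "a0 \<in> E" "a1 \<in> E" | "a1 \<in> E" "a2 \<in> E" | "a2 \<in> E" "a3 \<in> E" | "a3 \<in> E" "a0 \<in> E"
    using opposite_corners_not_in_edge[OF assms(1-3) pa E] opposite_corners_not_in_edge[OF assms(1-3) pa1 E]
    by blast
  then show ?thesis
  proof cases
    case 1 then show ?thesis using non_slidable_of_side_in_edge[OF assms(1-3) ins E] by blast
  next
    case 2 then show ?thesis using non_slidable_of_side_in_edge[OF assms(1-3) ins1 E] area1 by metis
  next
    case 3 then show ?thesis using non_slidable_of_side_in_edge[OF assms(1-3) ins2 E] area2 by metis
  next
    case 4 then show ?thesis using non_slidable_of_side_in_edge[OF assms(1-3) ins3 E] area3 by metis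
  qed
qed

theorem lemma2:
  assumes "convex_polygon P"
  shows "(\<forall>a0 a1 a2 a3. locally_maximal P a0 a1 a2 a3 \<longrightarrow> inscribed P a0 a1 a2 a3)
    \<and> (\<forall>a0 a1 a2 a3. inscribed P a0 a1 a2 a3 \<and> slidable P a0 a1 a2 a3 \<longrightarrow>
         (\<exists>b0 b1 b2 b3. inscribed P b0 b1 b2 b3 \<and> \<not> slidable P b0 b1 b2 b3
            \<and> par_area b0 b1 b2 b3 = par_area a0 a1 a2 a3))"
proof -
  obtain S where "finite S" "P = convex hull S" and "interior P \<noteq> {}"
    using assms unfolding convex_polygon_def by blast
  then have "convex P" "closed P"
    by (simp_all add: compact_imp_closed compact_convex_hull finite_imp_compact)
  then show ?thesis
    using locally_maximal_imp_inscribed non_slidable_of_slidable \<open>interior P \<noteq> {}\<close> by blast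
qed

end
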